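(* Let $\mathbb{X},\mathbb{Y}$ be real Banach spaces and $T:\mathbb{X}\to\mathbb{Y}$ a bounded linear operator that preserves Birkhoff–James orthogonality at $u$ and at $v$, where $u,v\in S_{\mathbb{X}}$ lie on a common face $F$ of $B_{\mathbb{X}}$ which is supported by a functional $f\in S_{\mathbb{X}^*}$ (i.e. $f\equiv1$ on $F$). Then $\|Tu\|=\|Tv\|$.
   Context: $u\perp_B v$ means $\|u+\lambda v\|\ge\|u\|$ for all real $\lambda$; $T$ preserves Birkhoff–James orthogonality at $x$ if $x\perp_B w\Rightarrow Tx\perp_B Tw$ for all $w$. A convex subset $F$ of a convex set $G$ is a face of $G$ if whenever $a,b\in G$, $0<t<1$ and $(1-t)a+tb\in F$, then $a,b\in F$. $B_{\mathbb{X}}$, $S_{\mathbb{X}}$ denote the closed unit ball and unit sphere. *)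

theory Defs
  imports "HOL-Analysis.Analysis"
begin

definition bj_orth :: "'a::real_normed_vector \<Rightarrow> 'a \<Rightarrow> bool" where
  "bj_orth u v \<longleftrightarrow> (\<forall>l::real. norm (u + l *\<^sub>R v) \<ge> norm u)"

definition preserves_bj_at :: "('a::real_normed_vector \<Rightarrow> 'b::real_normed_vector) \<Rightarrow> 'a \<Rightarrow> bool" where
  "preserves_bj_at T x \<longleftrightarrow> (\<forall>w. bj_orth x w \<longrightarrow> bj_orth (T x) (T w))"

end

theory Submission
  imports Defs
begin

text \<open>If a norm-one functional f equals 1 at u and v, then u is Birkhoff--James orthogonal
  to v - u, because f is constantly 1 on the line through u and v and so the norm is at
  least 1 there. Hence T u is orthogonal to T v - T u, which gives
  norm (T u) \<le> norm (T v); the symmetric argument gives the reverse inequality.\<close>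

lemma bj_orth_if_norming_functional:
  fixes f :: "'a::real_normed_vector \<Rightarrow>\<^sub>L real"
  assumes "norm f \<le> 1" and "blinfun_apply f u = norm u" and "blinfun_apply f w = 0"
  shows "bj_orth u w"
  unfolding bj_orth_def
proof
  fix l :: real
  have "norm u = blinfun_apply f (u + l *\<^sub>R w)"
    using assms(2,3) by (simp add: blinfun.add_right blinfun.scaleR_right)
  also have "\<dots> \<le> norm f * norm (u + l *\<^sub>R w)"
    using norm_blinfun[of f "u + l *\<^sub>R w"] by simp
  also have "\<dots> \<le> norm (u + l *\<^sub>R w)"
    using assms(1) by (simp add: mult_left_le_one_le)
  finally show "norm u \<le> norm (u + l *\<^sub>R w)" .
qed

lemma norm_le_if_preserves_bj_at:
  fixes T :: "'a::real_normed_vector \<Rightarrow> 'b::real_normed_vector"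
  assumes "linear T" and "preserves_bj_at T u" and "bj_orth u (v - u)"
  shows "norm (T u) \<le> norm (T v)"
proof -
  have "bj_orth (T u) (T (v - u))"
    using assms(2,3) unfolding preserves_bj_at_def by blast
  then have "norm (T u) \<le> norm (T u + 1 *\<^sub>R T (v - u))"
    unfolding bj_orth_def by blast
  also have "T u + 1 *\<^sub>R T (v - u) = T v"
    using assms(1) by (simp add: linear_diff)
  finally show ?thesis .
qed

lemma norm_le_if_preserves_bj_at_on_norming_level_set:
  fixes T :: "'a::real_normed_vector \<Rightarrow> 'b::real_normed_vector"
    and f :: "'a \<Rightarrow>\<^sub>L real"
  assumes "linear T" and "preserves_bj_at T u" and "norm u = 1" and "norm f \<le> 1"
    and "blinfun_apply f u = 1" and "blinfun_apply f v = 1"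
  shows "norm (T u) \<le> norm (T v)"
proof -
  have "blinfun_apply f (v - u) = 0"
    using assms(5,6) by (simp add: blinfun.diff_right)
  then have "bj_orth u (v - u)"
    using assms(3-5) by (intro bj_orth_if_norming_functional) simp_all
  with assms(1,2) show ?thesis
    by (rule norm_le_if_preserves_bj_at)
qed

text \<open>F only serves to give f u = f v = 1.\<close>

theorem mainTheorem12:
  fixes T :: "'a::banach \<Rightarrow> 'b::banach"
    and u v :: 'a
    and F :: "'a set"
    and f :: "'a \<Rightarrow>\<^sub>L real"
  assumes "bounded_linear T"
    and "preserves_bj_at T u"
    and "preserves_bj_at T v"
    and "norm u = 1" and "norm v = 1"
    and "F face_of cball 0 1"
    and "u \<in> F" and "v \<in> F"
    and "norm f = 1"
    and "\<forall>x\<in>F. blinfun_apply f x = 1"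
  shows "norm (T u) = norm (T v)"
proof -
  have T: "linear T" and f: "norm f \<le> 1"
    using assms(1,9) bounded_linear.linear by auto
  have fu: "blinfun_apply f u = 1" and fv: "blinfun_apply f v = 1"
    using assms(7,8,10) by auto
  show ?thesis
    using norm_le_if_preserves_bj_at_on_norming_level_set[OF T assms(2,4) f fu fv]
      norm_le_if_preserves_bj_at_on_norming_level_set[OF T assms(3,5) f fv fu]
    by linarith
qed

end
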